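(* Let $y_0\in\mathbb{R}$, $b>0$, $\epsilon>0$, and let $f:[y_0,\infty)\to\mathbb{R}$ be such that $p:=1/f$ is well defined and twice differentiable on $[y_0,\infty)$, with $f(y_0)>0$, $f'(y)>0$ and $p''(y)>0$ for all $y\ge y_0$. Assume $b<\int_{y_0}^{\infty}p(y)\,dy$ (possibly $+\infty$). For $h>0$ and integers $N\ge0$ define $$\Sigma_{l,h,N}=\sum_{i=1}^{N}h\,p(y_0+hi),\qquad \Sigma_{t,h,N}=\sum_{i=1}^{N}\frac h2\big(p(y_0+hi)+p(y_0+h(i-1))\big),$$ and set $\Sigma_{t,h,N}=0$ for integers $N<0$. For each positive integer $j$ let $h^{(j)}=\epsilon/j$ and let $n_2^{(j)}$ be the smallest positive integer $N$ with $\Sigma_{l,h^{(j)},N}\ge b$; assume $n_2^{(1)}$ exists. Consider Algorithm 1: for $j=1,2,3,\dots$, compute $n_2^{(j)}$ and stop as soon as $\Sigma_{t,h^{(j)},\,n_2^{(j)}-j}\le b$. Then Algorithm 1 stops after finitely many iterations, i.e. there exists a positive integer $j$ with $\Sigma_{t,h^{(j)},\,n_2^{(j)}-j}\le b$.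
   Context: $\Sigma_{l,h,N}$ and $\Sigma_{t,h,N}$ are the lower rectangular and trapezoidal sums with step $h$ for $\int_{y_0}^{y_0+hN}p(y)\,dy$ (empty sums are $0$). When Algorithm 1 stops at iteration $j$, it outputs an approximation such as $y_0+h^{(j)}n_2^{(j)}$ to the number $Y$ defined by $\int_{y_0}^{Y}p(y)\,dy=b$ (the value at $x=b$ of the solution of $y'=f(y)$, $y(0)=y_0$). *)

theory Defs
  imports "HOL-Analysis.Analysis"
begin

definition sigma_l :: "(real \<Rightarrow> real) \<Rightarrow> real \<Rightarrow> real \<Rightarrow> nat \<Rightarrow> real" where
  "sigma_l p y0 h N = (\<Sum>i=1..N. h * p (y0 + h * real i))"

definition sigma_t :: "(real \<Rightarrow> real) \<Rightarrow> real \<Rightarrow> real \<Rightarrow> int \<Rightarrow> real" where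
  "sigma_t p y0 h N = (if N < 0 then 0 else
     (\<Sum>i=1..nat N. h / 2 * (p (y0 + h * real i) + p (y0 + h * (real i - 1)))))"

definition n2 :: "(real \<Rightarrow> real) \<Rightarrow> real \<Rightarrow> real \<Rightarrow> real \<Rightarrow> nat" where
  "n2 p y0 h b = (LEAST N. N > 0 \<and> sigma_l p y0 h N \<ge> b)"

end

theory Submission
  imports Defs
begin

text \<open>Since \<open>p\<close> decreases, refining the step from \<open>\<epsilon>\<close> to \<open>h = \<epsilon>/j\<close>
  can only increase the lower sum, so \<open>n = n\<^sub>2(h)\<close> satisfies \<open>h n \<le> \<epsilon> n\<^sub>2(\<epsilon>)\<close> and every sample
  \<open>p(y\<^sub>0 + h i)\<close> with \<open>i \<le> n\<close> is at least \<open>c = p(y\<^sub>0 + \<epsilon> n\<^sub>2(\<epsilon>)) > 0\<close>. The trapezoidal sum with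
  \<open>n - j\<close> steps exceeds the lower sum with \<open>n - j\<close> steps by at most \<open>h p(y\<^sub>0)/2\<close>, while the lower
  sum with \<open>n - 1\<close> steps, which is \<open>< b\<close> by minimality of \<open>n\<close>, has \<open>j - 1\<close> further terms, each
  at least \<open>h c\<close>. Hence the algorithm stops as soon as \<open>(j - 1) c \<ge> p(y\<^sub>0)/2\<close>.\<close>

lemma mono_on_atLeast_if_deriv_pos:
  fixes f f' :: "real \<Rightarrow> real"
  assumes "\<forall>y\<ge>y0. (f has_real_derivative f' y) (at y within {y0..}) \<and> f' y > 0"
  shows "mono_on {y0..} f"
proof (rule monotone_onI)
  fix a b assume ab: "a \<in> {y0..}" "b \<in> {y0..}" "a \<le> b"
  have cont: "continuous_on {y0..} f"
    using assms by (metis DERIV_continuous atLeast_iff continuous_on_eq_continuous_within)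
  show "f a \<le> f b"
  proof (rule DERIV_nonneg_imp_increasing_open[OF ab(3)])
    fix x assume x: "a < x" "x < b"
    then have "at x within {y0..} = at x"
      using ab by (intro at_within_interior) simp
    then show "\<exists>y. DERIV f x :> y \<and> y \<ge> 0"
      using assms x ab by (metis atLeast_iff less_eq_real_def order.trans)
  next
    show "continuous_on {a..b} f"
      using cont ab by (elim continuous_on_subset) auto
  qed
qed

lemma antimono_on_reciprocal:
  fixes f :: "real \<Rightarrow> real"
  assumes "mono_on S f" and "\<And>y. y \<in> S \<Longrightarrow> f y > 0"
  shows "antimono_on S (\<lambda>t. 1 / f t)"
  using assms by (intro monotone_onI) (simp add: frac_le monotone_onD)

lemma sigma_l_nonneg:
  assumes "\<And>y. y \<ge> y0 \<Longrightarrow> p y \<ge> 0" and "h \<ge> 0"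
  shows "sigma_l p y0 h N \<ge> 0"
  unfolding sigma_l_def using assms by (intro sum_nonneg) simp

lemma sigma_l_add:
  "sigma_l p y0 h (N + K) = sigma_l p y0 h N + (\<Sum>i=N+1..N+K. h * p (y0 + h * real i))"
  unfolding sigma_l_def by (subst sum.union_disjoint[symmetric]) (auto intro: sum.cong)

lemma sum_trapezoid_telescope:
  fixes q :: "nat \<Rightarrow> real"
  shows "(\<Sum>i=1..N. h / 2 * (q i + q (i - 1))) = (\<Sum>i=1..N. h * q i) + h / 2 * (q 0 - q N)"
  by (induction N) (auto simp: field_simps)

lemma sigma_t_eq_sigma_l:
  "sigma_t p y0 h (int N) = sigma_l p y0 h N + h / 2 * (p y0 - p (y0 + h * real N))"
proof -
  have "sigma_t p y0 h (int N) = (\<Sum>i=1..N. h / 2 * (p (y0 + h * real i) + p (y0 + h * real (i - 1))))"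
    unfolding sigma_t_def by (auto simp: of_nat_diff intro!: sum.cong)
  then show ?thesis
    using sum_trapezoid_telescope[of h "\<lambda>i. p (y0 + h * real i)" N] by (simp add: sigma_l_def)
qed

text \<open>Each step of size \<open>h\<close> is covered by \<open>j\<close> steps of size \<open>h/j\<close>, whose right endpoints all lie
  to the left of that of the coarse step.\<close>
lemma sigma_l_refine_ge:
  assumes anti: "antimono_on {y0..} p" and h: "h > 0" and j: "j > 0"
  shows "sigma_l p y0 h K \<le> sigma_l p y0 (h / real j) (j * K)"
proof (induction K)
  case 0
  then show ?case by (simp add: sigma_l_def)
next
  case (Suc K)
  define y where "y = y0 + h * real (Suc K)"
  have "(\<Sum>i=j*K+1..j*K+j. h / real j * p y) \<le> (\<Sum>i=j*K+1..j*K+j. h / real j * p (y0 + h / real j * real i))"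
  proof (rule sum_mono)
    fix i assume i: "i \<in> {j*K+1..j*K+j}"
    have "i \<le> j * Suc K"
      using i by simp
    then have "real i \<le> real j * real (Suc K)"
      by (metis of_nat_mono of_nat_mult)
    then have "h / real j * real i \<le> h / real j * (real j * real (Suc K))"
      using h by (intro mult_left_mono) auto
    also have "\<dots> = h * real (Suc K)"
      using j by simp
    finally have "h / real j * real i \<le> h * real (Suc K)" .
    then have "p y \<le> p (y0 + h / real j * real i)"
      using h by (intro monotone_onD[OF anti]) (auto simp: y_def)
    then show "h / real j * p y \<le> h / real j * p (y0 + h / real j * real i)"
      using h by (intro mult_left_mono) auto
  qed
  moreover have "(\<Sum>i=j*K+1..j*K+j. h / real j * p y) = h * p y"
    using j by simp
  moreover have "sigma_l p y0 h (Suc K) = sigma_l p y0 h K + h * p y"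
    by (simp add: sigma_l_def y_def)
  moreover have "sigma_l p y0 (h / real j) (j * Suc K) = sigma_l p y0 (h / real j) (j * K)
      + (\<Sum>i=j*K+1..j*K+j. h / real j * p (y0 + h / real j * real i))"
    using sigma_l_add[of p y0 "h / real j" "j * K" j] by (metis add.commute mult_Suc_right)
  ultimately show ?case
    using Suc.IH by linarith
qed

lemma n2_pos_le:
  assumes "N > 0" "sigma_l p y0 h N \<ge> b"
  shows "n2 p y0 h b > 0" "n2 p y0 h b \<le> N"
  using LeastI[of "\<lambda>N. N > 0 \<and> sigma_l p y0 h N \<ge> b", OF conjI[OF assms]]
    Least_le[of "\<lambda>N. N > 0 \<and> sigma_l p y0 h N \<ge> b", OF conjI[OF assms]]
  by (auto simp: n2_def)

lemma sigma_l_before_n2: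
  assumes "b > 0" "N > 0" "sigma_l p y0 h N \<ge> b"
  shows "sigma_l p y0 h (n2 p y0 h b - 1) < b"
proof (cases "n2 p y0 h b = 1")
  case True
  then show ?thesis using assms(1) by (simp add: sigma_l_def)
next
  case False
  then have "n2 p y0 h b - 1 > 0" "n2 p y0 h b - 1 < n2 p y0 h b"
    using n2_pos_le(1)[OF assms(2,3)] by auto
  then show ?thesis
    using not_less_Least[of "n2 p y0 h b - 1" "\<lambda>N. N > 0 \<and> sigma_l p y0 h N \<ge> b"]
    by (auto simp: n2_def)
qed

lemma sigma_t_shifted_le_sigma_l:
  assumes anti: "antimono_on {y0..} p" and nonneg: "\<And>y. y \<ge> y0 \<Longrightarrow> p y \<ge> 0"
    and h: "h > 0" and j: "j > 0" and lower: "p (y0 + h * real n) \<ge> c"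
    and many: "real (j - 1) * c \<ge> p y0 / 2"
  shows "sigma_t p y0 h (int n - int j) \<le> sigma_l p y0 h (n - 1)"
proof (cases "j \<le> n")
  case False
  then show ?thesis
    using h nonneg by (simp add: sigma_t_def sigma_l_nonneg)
next
  case True
  define N where "N = n - j"
  have p_ge_c: "p (y0 + h * real i) \<ge> c" if "i \<le> n" for i
    using that h lower by (intro order.trans[OF lower] monotone_onD[OF anti]) auto
  have "sigma_t p y0 h (int n - int j) = sigma_l p y0 h N + h / 2 * (p y0 - p (y0 + h * real N))"
    using True sigma_t_eq_sigma_l[of p y0 h N] by (simp add: N_def of_nat_diff)
  moreover have "h / 2 * (p y0 - p (y0 + h * real N)) \<le> real (j - 1) * (h * c)"
  proof -
    have "h * p (y0 + h * real N) \<ge> 0"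
      using h nonneg[of "y0 + h * real N"] by simp
    moreover have "h * (p y0 / 2) \<le> h * (real (j - 1) * c)"
      using many h by (intro mult_left_mono) auto
    ultimately show ?thesis
      by (simp add: algebra_simps)
  qed
  moreover have "real (j - 1) * (h * c) \<le> (\<Sum>i=N+1..N+(j-1). h * p (y0 + h * real i))"
  proof -
    have "real (j - 1) * (h * c) = (\<Sum>i=N+1..N+(j-1). h * c)"
      by simp
    also have "\<dots> \<le> (\<Sum>i=N+1..N+(j-1). h * p (y0 + h * real i))"
      using h p_ge_c True j by (intro sum_mono mult_left_mono) (auto simp: N_def)
    finally show ?thesis .
  qed
  moreover have "sigma_l p y0 h (n - 1) = sigma_l p y0 h N + (\<Sum>i=N+1..N+(j-1). h * p (y0 + h * real i))"
    using True j sigma_l_add[of p y0 h N "j - 1"] by (simp add: N_def)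
  ultimately show ?thesis
    by linarith
qed

theorem theorem1:
  fixes f f' p' p'' :: "real \<Rightarrow> real" and y0 b \<epsilon> :: real
  assumes b_pos: "b > 0" and eps_pos: "\<epsilon> > 0"
    and f_nz: "\<forall>y\<ge>y0. f y \<noteq> 0"
    and f_y0: "f y0 > 0"
    and f_deriv: "\<forall>y\<ge>y0. (f has_real_derivative f' y) (at y within {y0..}) \<and> f' y > 0"
    and p_deriv: "\<forall>y\<ge>y0. ((\<lambda>t. 1 / f t) has_real_derivative p' y) (at y within {y0..})"
    and p'_deriv: "\<forall>y\<ge>y0. (p' has_real_derivative p'' y) (at y within {y0..}) \<and> p'' y > 0"
    and b_lt_int: "\<exists>T\<ge>y0. (\<lambda>t. 1 / f t) integrable_on {y0..T} \<and> b < integral {y0..T} (\<lambda>t. 1 / f t)"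
    and n2_1_exists: "\<exists>N::nat. N > 0 \<and> sigma_l (\<lambda>t. 1 / f t) y0 \<epsilon> N \<ge> b"
  shows "\<exists>j::nat. j > 0 \<and>
           (\<exists>N::nat. N > 0 \<and> sigma_l (\<lambda>t. 1 / f t) y0 (\<epsilon> / real j) N \<ge> b) \<and>
           sigma_t (\<lambda>t. 1 / f t) y0 (\<epsilon> / real j)
             (int (n2 (\<lambda>t. 1 / f t) y0 (\<epsilon> / real j) b) - int j) \<le> b"
proof -
  define p where "p = (\<lambda>t. 1 / f t)"
  have f_mono: "mono_on {y0..} f"
    using mono_on_atLeast_if_deriv_pos[OF f_deriv] .
  have f_pos: "f y > 0" if "y \<in> {y0..}" for y
    using f_y0 monotone_onD[OF f_mono _ that] that by fastforce
  have p_pos: "p y > 0" if "y \<ge> y0" for y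
    using f_pos that by (simp add: p_def)
  have p_anti: "antimono_on {y0..} p"
    unfolding p_def using antimono_on_reciprocal[OF f_mono f_pos] .
  obtain M :: nat where M: "M > 0" "sigma_l p y0 \<epsilon> M \<ge> b"
    using n2_1_exists by (auto simp: p_def)
  define c where "c = p (y0 + \<epsilon> * real M)"
  have c_pos: "c > 0"
    using p_pos eps_pos by (simp add: c_def)
  obtain j :: nat where j: "real j \<ge> 1 + p y0 / (2 * c)"
    using real_arch_simple by blast
  have "p y0 / (2 * c) > 0"
    using c_pos p_pos[of y0] by simp
  then have j_pos: "j > 0"
    using j by (cases j) auto
  define h where "h = \<epsilon> / real j"
  have h_pos: "h > 0"
    using eps_pos j_pos by (simp add: h_def)
  have refined: "j * M > 0" "sigma_l p y0 h (j * M) \<ge> b"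
    using M j_pos order.trans[OF M(2) sigma_l_refine_ge[OF p_anti eps_pos j_pos]]
    by (simp_all add: h_def)
  define n where "n = n2 p y0 h b"
  have "h * real n \<le> h * (real j * real M)"
    using n2_pos_le(2)[OF refined] h_pos by (simp add: n_def flip: of_nat_mult)
  also have "\<dots> = \<epsilon> * real M"
    using j_pos by (simp add: h_def)
  finally have "p (y0 + h * real n) \<ge> c"
    using h_pos eps_pos unfolding c_def by (intro monotone_onD[OF p_anti]) auto
  moreover have "real (j - 1) * c \<ge> p y0 / 2"
    using j j_pos c_pos by (simp add: of_nat_diff field_simps)
  ultimately have "sigma_t p y0 h (int n - int j) \<le> sigma_l p y0 h (n - 1)"
    using sigma_t_shifted_le_sigma_l[OF p_anti _ h_pos j_pos] p_pos by (simp add: less_imp_le)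
  also have "\<dots> < b"
    using sigma_l_before_n2[OF b_pos refined] by (simp add: n_def)
  finally show ?thesis
    using j_pos refined unfolding p_def h_def n_def by (intro exI[of _ j] conjI exI[of _ "j * M"]) auto
qed

end
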